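(* Let $b>0$, $L\in\mathbb{R}$, let $f:[L,\infty)\to\mathbb{R}$ and $h:(-\infty,L)\to\mathbb{R}$, and define $\tilde f:\mathbb{R}\to\mathbb{R}$ by $\tilde f(x)=f(x)$ for $x\ge L$ and $\tilde f(x)=h(x)$ for $x<L$. Suppose $\tilde f$ is twice differentiable on $\mathbb{R}$ and that $\tilde f$ and $\tilde f''$ are tempered distributions. Then for every $q\ge L$, with $Z\sim\operatorname{Lap}(0,b)$, $$\mathbb{E}\big[\tilde f(q+Z)-b^2\tilde f''(q+Z)\big]=f(q).$$
   Context: $\operatorname{Lap}(0,b)$ denotes the Laplace distribution with density $\frac{1}{2b}e^{-|x|/b}$. The Schwartz space $S(\mathbb{R})$ is the set of $C^\infty$ functions $s:\mathbb{R}\to\mathbb{C}$ with $\sup_x|x^m s^{(n)}(x)|<\infty$ for all integers $m,n\ge0$. A function $F:\mathbb{R}\to\mathbb{R}$ is a tempered distribution if it is locally integrable and $\int_{-\infty}^\infty |F(x)s(x)|dx<\infty$ for every $s\in S(\mathbb{R})$. *)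

theory Defs
  imports "HOL-Analysis.Analysis"
begin

fun higher_vderiv :: "nat \<Rightarrow> (real \<Rightarrow> complex) \<Rightarrow> real \<Rightarrow> complex" where
  "higher_vderiv 0 s = s"
| "higher_vderiv (Suc n) s = (\<lambda>x. vector_derivative (higher_vderiv n s) (at x))"

definition schwartz_space :: "(real \<Rightarrow> complex) set" where
  "schwartz_space = {s. (\<forall>n x. higher_vderiv n s differentiable (at x)) \<and>
      (\<forall>m n. \<exists>C. \<forall>x. norm (complex_of_real (x ^ m) * higher_vderiv n s x) \<le> C)}"

definition locally_integrable :: "(real \<Rightarrow> real) \<Rightarrow> bool" where
  "locally_integrable F \<longleftrightarrow> (\<forall>K. compact K \<longrightarrow> set_integrable lborel K F)"

definition tempered_distribution :: "(real \<Rightarrow> real) \<Rightarrow> bool" where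
  "tempered_distribution F \<longleftrightarrow> locally_integrable F \<and>
     (\<forall>s\<in>schwartz_space.
        (\<integral>\<^sup>+ x. ennreal (norm (complex_of_real (F x) * s x)) \<partial>lborel) < \<infinity>)"

definition laplace_density :: "real \<Rightarrow> real \<Rightarrow> real" where
  "laplace_density b x = exp (- \<bar>x\<bar> / b) / (2 * b)"

definition laplace_measure :: "real \<Rightarrow> real measure" where
  "laplace_measure b = density lborel (\<lambda>x. ennreal (laplace_density b x))"

end

(* Put G z = F (q + z) with F the glued function. Splitting the Laplace expectation at 0, each
   half-line integral of (G - b^2 G'') e^(-z/b) has the antiderivative -b (G + b G') e^(-z/b), so
   it equals b (G 0 + b G' 0) on [0, oo) and b (G 0 - b G' 0) on the reflected half-line; the
   derivative terms cancel and division by 2b leaves F q.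
   Temperedness enters only through the Schwartz function sech (c x): it makes F and F''
   integrable against e^(-c|z|) for c = 1/(2b). Then G' grows at most like e^(c R) and G like
   R e^(c R), which is slower than e^(R/b), so the boundary term vanishes at infinity. *)
theory Submission
  imports Defs "HOL-Computational_Algebra.Polynomial" "HOL-Real_Asymp.Real_Asymp"
begin

(* From tanh' = c (1 - tanh^2) and (1/cosh)' = - c tanh / cosh. *)
lemma has_real_derivative_poly_tanh_div_cosh:
  fixes c :: real
  shows "((\<lambda>x. poly p (tanh (c * x)) / cosh (c * x)) has_real_derivative
     poly (smult c (pderiv p * [:1, 0, -1:] - p * [:0, 1:])) (tanh (c * x)) / cosh (c * x)) (at x)"
proof -
  have cosh_nz: "cosh (c * x) \<noteq> 0"
    by (metis cosh_real_pos less_irrefl)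
  have "((\<lambda>x. tanh (c * x)) has_real_derivative (1 - tanh (c * x)^2) * c) (at x)"
    using has_field_derivative_tanh[OF cosh_nz DERIV_cmult_Id] by simp
  then have "((\<lambda>x. poly p (tanh (c * x)) / cosh (c * x)) has_real_derivative
      (poly (pderiv p) (tanh (c * x)) * ((1 - tanh (c * x)^2) * c) * cosh (c * x)
        - poly p (tanh (c * x)) * (sinh (c * x) * c)) / (cosh (c * x) * cosh (c * x))) (at x)"
    by (intro DERIV_divide DERIV_chain2[OF poly_DERIV] cosh_nz) (auto intro!: derivative_eq_intros)
  moreover have "(poly (pderiv p) (tanh (c * x)) * ((1 - tanh (c * x)^2) * c) * cosh (c * x)
        - poly p (tanh (c * x)) * (sinh (c * x) * c)) / (cosh (c * x) * cosh (c * x))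
      = poly (smult c (pderiv p * [:1, 0, -1:] - p * [:0, 1:])) (tanh (c * x)) / cosh (c * x)"
    using cosh_nz by (simp add: tanh_def field_simps power2_eq_square)
  ultimately show ?thesis
    by simp
qed

lemma higher_vderiv_sech_eq_poly_tanh:
  fixes c :: real
  shows "\<exists>p. higher_vderiv n (\<lambda>x. complex_of_real (1 / cosh (c * x)))
           = (\<lambda>x. complex_of_real (poly p (tanh (c * x)) / cosh (c * x)))"
proof (induction n)
  case 0
  show ?case
    by (rule exI[of _ "[:1:]"]) simp
next
  case (Suc n)
  then obtain p where p: "higher_vderiv n (\<lambda>x. complex_of_real (1 / cosh (c * x)))
      = (\<lambda>x. complex_of_real (poly p (tanh (c * x)) / cosh (c * x)))"
    by blast
  let ?q = "smult c (pderiv p * [:1, 0, -1:] - p * [:0, 1:])"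
  have "vector_derivative (\<lambda>x. complex_of_real (poly p (tanh (c * x)) / cosh (c * x))) (at x)
      = complex_of_real (poly ?q (tanh (c * x)) / cosh (c * x))" for x
    by (rule vector_derivative_at[OF has_vector_derivative_of_real[OF has_real_derivative_poly_tanh_div_cosh]])
  then show ?case
    by (intro exI[of _ ?q]) (simp only: higher_vderiv.simps p)
qed

lemma power_div_fact_le_exp:
  fixes y :: real
  assumes "0 \<le> y"
  shows "y ^ m / fact m \<le> exp y"
proof -
  have "(\<Sum>n\<in>{m}. y ^ n /\<^sub>R fact n) \<le> (\<Sum>n. y ^ n /\<^sub>R fact n)"
    by (rule sum_le_suminf) (use assms summable_exp in auto)
  then show ?thesis
    by (simp add: sums_unique[OF exp_converges] divide_inverse mult.commute)
qed

lemma abs_power_div_cosh_le: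
  fixes c x :: real
  assumes c: "c > 0"
  shows "\<bar>x\<bar> ^ m / cosh (c * x) \<le> 2 * fact m / c ^ m"
proof -
  have "(c * \<bar>x\<bar>) ^ m / fact m \<le> exp (c * \<bar>x\<bar>)"
    by (rule power_div_fact_le_exp) (use c in auto)
  then have "\<bar>x\<bar> ^ m \<le> fact m * exp \<bar>c * x\<bar> / c ^ m"
    using c by (simp add: field_simps power_mult_distrib abs_mult)
  also have "\<dots> \<le> fact m * (2 * cosh (c * x)) / c ^ m"
    using c by (intro divide_right_mono mult_left_mono) (auto simp: cosh_def abs_if)
  finally show ?thesis
    using cosh_real_pos[of "c * x"] c by (simp add: field_simps)
qed

lemma abs_poly_tanh_le:
  fixes p :: "real poly"
  shows "\<bar>poly p (tanh y)\<bar> \<le> (\<Sum>i\<le>degree p. \<bar>coeff p i\<bar>)"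
proof -
  have tanh_le: "\<bar>tanh y\<bar> \<le> 1"
    using tanh_real_lt_1[of "\<bar>y\<bar>"] by simp
  have "\<bar>poly p (tanh y)\<bar> \<le> (\<Sum>i\<le>degree p. \<bar>coeff p i * tanh y ^ i\<bar>)"
    unfolding poly_altdef by (rule sum_abs)
  also have "\<dots> \<le> (\<Sum>i\<le>degree p. \<bar>coeff p i\<bar>)"
    by (intro sum_mono) (auto simp: abs_mult power_abs intro!: mult_left_le power_le_one tanh_le)
  finally show ?thesis .
qed

lemma sech_in_schwartz_space:
  fixes c :: real
  assumes c: "c > 0"
  shows "(\<lambda>x. complex_of_real (1 / cosh (c * x))) \<in> schwartz_space"
  unfolding schwartz_space_def
proof (intro CollectI conjI allI)
  fix n x
  obtain p where p: "higher_vderiv n (\<lambda>x. complex_of_real (1 / cosh (c * x)))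
      = (\<lambda>x. complex_of_real (poly p (tanh (c * x)) / cosh (c * x)))"
    using higher_vderiv_sech_eq_poly_tanh by blast
  show "higher_vderiv n (\<lambda>x. complex_of_real (1 / cosh (c * x))) differentiable (at x)"
    unfolding p
    by (rule differentiableI_vector[OF has_vector_derivative_of_real[OF has_real_derivative_poly_tanh_div_cosh]])
next
  fix m n
  obtain p where p: "higher_vderiv n (\<lambda>x. complex_of_real (1 / cosh (c * x)))
      = (\<lambda>x. complex_of_real (poly p (tanh (c * x)) / cosh (c * x)))"
    using higher_vderiv_sech_eq_poly_tanh by blast
  have "norm (complex_of_real (x ^ m) * higher_vderiv n (\<lambda>x. complex_of_real (1 / cosh (c * x))) x)
      \<le> (2 * fact m / c ^ m) * (\<Sum>i\<le>degree p. \<bar>coeff p i\<bar>)" for x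
  proof -
    have "norm (complex_of_real (x ^ m) * higher_vderiv n (\<lambda>x. complex_of_real (1 / cosh (c * x))) x)
        = (\<bar>x\<bar> ^ m / cosh (c * x)) * \<bar>poly p (tanh (c * x))\<bar>"
      unfolding p using cosh_real_pos[of "c * x"] by (simp add: norm_mult norm_divide norm_power)
    also have "\<dots> \<le> (2 * fact m / c ^ m) * (\<Sum>i\<le>degree p. \<bar>coeff p i\<bar>)"
      using c cosh_real_pos[of "c * x"]
      by (intro mult_mono abs_power_div_cosh_le abs_poly_tanh_le) auto
    finally show ?thesis .
  qed
  then show "\<exists>C. \<forall>x. norm (complex_of_real (x ^ m)
      * higher_vderiv n (\<lambda>x. complex_of_real (1 / cosh (c * x))) x) \<le> C"
    by blast
qed

lemma tempered_distribution_integrable_div_cosh: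
  fixes F :: "real \<Rightarrow> real"
  assumes "tempered_distribution F" and [measurable]: "F \<in> borel_measurable borel" and "c > 0"
  shows "integrable lborel (\<lambda>x. F x / cosh (c * x))"
proof (rule integrableI_bounded)
  have [measurable]: "(\<lambda>x. cosh (c * x)) \<in> borel_measurable borel"
    by (intro borel_measurable_continuous_onI continuous_intros)
  show "(\<lambda>x. F x / cosh (c * x)) \<in> borel_measurable lborel"
    by measurable
  have "(\<integral>\<^sup>+ x. ennreal (norm (complex_of_real (F x) * complex_of_real (1 / cosh (c * x)))) \<partial>lborel) < \<infinity>"
    using assms(1) sech_in_schwartz_space[OF \<open>c > 0\<close>] unfolding tempered_distribution_def
    by (auto dest!: bspec)
  moreover have "norm (complex_of_real (F x) * complex_of_real (1 / cosh (c * x))) = norm (F x / cosh (c * x))" for x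
    using cosh_real_pos[of "c * x"] by (simp add: norm_mult norm_divide)
  ultimately show "(\<integral>\<^sup>+ x. ennreal (norm (F x / cosh (c * x))) \<partial>lborel) < \<infinity>"
    by simp
qed

lemma integrable_affine_exp_weight_of_div_cosh:
  fixes K :: "real \<Rightarrow> real"
  assumes c: "c > 0" and s: "\<bar>s\<bar> = 1" and [measurable]: "K \<in> borel_measurable borel"
    and K: "integrable lborel (\<lambda>x. K x / cosh (c * x))"
  shows "integrable lborel (\<lambda>z. K (q + s * z) * exp (- c * \<bar>z\<bar>))"
proof (rule Bochner_Integration.integrable_bound)
  show "integrable lborel (\<lambda>z. exp (c * \<bar>q\<bar>) * (K (q + s * z) / cosh (c * (q + s * z))))"
    using lborel_integrable_real_affine[OF K, of s q] s by (intro integrable_mult_right) auto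
  show "(\<lambda>z. K (q + s * z) * exp (- c * \<bar>z\<bar>)) \<in> borel_measurable lborel"
    by measurable
  show "AE z in lborel. norm (K (q + s * z) * exp (- c * \<bar>z\<bar>))
      \<le> norm (exp (c * \<bar>q\<bar>) * (K (q + s * z) / cosh (c * (q + s * z))))"
  proof (rule AE_I2)
    fix z
    let ?y = "c * (q + s * z)"
    have cosh_pos: "cosh ?y > 0"
      by (rule cosh_real_pos)
    have "\<bar>?y\<bar> \<le> c * \<bar>q\<bar> + c * \<bar>z\<bar>"
      using c s abs_triangle_ineq[of q "s * z"] by (simp add: abs_mult distrib_left[symmetric])
    then have "exp (- c * \<bar>z\<bar>) \<le> exp (c * \<bar>q\<bar>) * exp (- \<bar>?y\<bar>)"
      unfolding exp_add[symmetric] by simp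
    also have "\<dots> \<le> exp (c * \<bar>q\<bar>) / cosh ?y"
    proof -
      have "cosh ?y \<le> exp \<bar>?y\<bar>"
        unfolding cosh_def by (cases "?y \<ge> 0") auto
      then show ?thesis
        using cosh_pos by (simp add: exp_minus field_simps)
    qed
    finally have "\<bar>K (q + s * z)\<bar> * exp (- c * \<bar>z\<bar>) \<le> \<bar>K (q + s * z)\<bar> * (exp (c * \<bar>q\<bar>) / cosh ?y)"
      by (rule mult_left_mono) simp
    then show "norm (K (q + s * z) * exp (- c * \<bar>z\<bar>))
        \<le> norm (exp (c * \<bar>q\<bar>) * (K (q + s * z) / cosh ?y))"
      using cosh_pos by (simp add: abs_mult ac_simps)
  qed
qed

lemma borel_measurable_has_real_derivative:
  fixes g g' :: "real \<Rightarrow> real"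
  assumes g: "\<And>x. (g has_real_derivative g' x) (at x)"
  shows "g \<in> borel_measurable borel" and "g' \<in> borel_measurable borel"
proof -
  have cont: "continuous_on UNIV g"
    using g by (meson DERIV_isCont continuous_at_imp_continuous_on)
  then show "g \<in> borel_measurable borel"
    by (rule borel_measurable_continuous_onI)
  show "g' \<in> borel_measurable borel"
  proof (rule borel_measurable_LIMSEQ_real)
    show "(\<lambda>x. (g (x + inverse (real (Suc i))) - g x) / inverse (real (Suc i))) \<in> borel_measurable borel" for i
      by (intro borel_measurable_continuous_onI continuous_intros continuous_on_compose2[OF cont]) auto
    fix x
    have "((\<lambda>h. (g (x + h) - g x) / h) \<longlongrightarrow> g' x) (at 0)"
      using g[of x] by (simp add: DERIV_def)
    moreover have "filterlim (\<lambda>i. inverse (real (Suc i))) (at 0) sequentially"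
      by (rule filterlim_atI[OF LIMSEQ_inverse_real_of_nat]) auto
    ultimately show "(\<lambda>i. (g (x + inverse (real (Suc i))) - g x) / inverse (real (Suc i))) \<longlonglongrightarrow> g' x"
      by (rule filterlim_compose)
  qed
qed

lemma set_integral_Icc_of_has_real_derivative:
  fixes F f :: "real \<Rightarrow> real"
  assumes "a \<le> b"
    and "\<And>x. a \<le> x \<Longrightarrow> x \<le> b \<Longrightarrow> (F has_real_derivative f x) (at x within {a..b})"
    and "set_integrable lborel {a..b} f"
  shows "(LBINT x:{a..b}. f x) = F b - F a"
proof -
  have "(f has_integral (F b - F a)) {a..b}"
    using assms(1,2) by (intro fundamental_theorem_of_calculus)
      (auto simp: has_real_derivative_iff_has_vector_derivative[symmetric])
  then show ?thesis
    using set_borel_integral_eq_integral(2)[OF assms(3)] by (simp add: integral_unique)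
qed

lemma set_integrable_half_line_of_exp_weight:
  fixes g :: "real \<Rightarrow> real"
  assumes "c \<le> 1 / b" and [measurable]: "g \<in> borel_measurable borel"
    and g: "integrable lborel (\<lambda>z. g z * exp (- c * \<bar>z\<bar>))"
  shows "set_integrable lborel {0..} (\<lambda>z. g z * exp (- z / b))"
  unfolding set_integrable_def
proof (rule Bochner_Integration.integrable_bound[OF integrable_abs[OF g]])
  show "(\<lambda>z. indicator {0..} z *\<^sub>R (g z * exp (- z / b))) \<in> borel_measurable lborel"
    by measurable
  have "exp (- z / b) \<le> exp (- c * \<bar>z\<bar>)" if "0 \<le> z" for z
    using mult_right_mono[OF assms(1) that] that by simp
  then show "AE z in lborel. norm (indicator {0..} z *\<^sub>R (g z * exp (- z / b)))
      \<le> norm \<bar>g z * exp (- c * \<bar>z\<bar>)\<bar>"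
    by (intro AE_I2) (auto simp: abs_mult indicator_def intro: mult_left_mono)
qed

lemma abs_le_exp_growth_of_weighted_derivative:
  fixes g g' :: "real \<Rightarrow> real"
  assumes c: "0 \<le> c" and g: "\<And>x. (g has_real_derivative g' x) (at x)"
    and g': "integrable lborel (\<lambda>z. g' z * exp (- c * \<bar>z\<bar>))" and R: "0 \<le> R"
  shows "\<bar>g R\<bar> \<le> \<bar>g 0\<bar> + exp (c * R) * (\<integral>z. \<bar>g' z * exp (- c * \<bar>z\<bar>)\<bar> \<partial>lborel)"
proof -
  note [measurable] = borel_measurable_has_real_derivative(2)[OF g]
  have bound: "\<bar>indicator {0..R} z *\<^sub>R g' z\<bar> \<le> exp (c * R) * \<bar>g' z * exp (- c * \<bar>z\<bar>)\<bar>" for z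
  proof (cases "z \<in> {0..R}")
    case True
    then have "c * \<bar>z\<bar> \<le> c * R"
      using c by (intro mult_left_mono) auto
    then have "1 \<le> exp (c * R) * exp (- c * \<bar>z\<bar>)"
      unfolding exp_add[symmetric] by simp
    then have "\<bar>g' z\<bar> * 1 \<le> \<bar>g' z\<bar> * (exp (c * R) * exp (- c * \<bar>z\<bar>))"
      by (rule mult_left_mono) simp
    then show ?thesis
      using True by (simp add: abs_mult mult.assoc mult.left_commute)
  next
    case False
    then show ?thesis
      by simp
  qed
  have int_bound: "integrable lborel (\<lambda>z. exp (c * R) * \<bar>g' z * exp (- c * \<bar>z\<bar>)\<bar>)"
    by (intro integrable_mult_right integrable_abs g')
  have int_Icc: "set_integrable lborel {0..R} g'"
    unfolding set_integrable_def
  proof (rule Bochner_Integration.integrable_bound[OF int_bound])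
    show "AE z in lborel. norm (indicator {0..R} z *\<^sub>R g' z) \<le> norm (exp (c * R) * \<bar>g' z * exp (- c * \<bar>z\<bar>)\<bar>)"
      using bound by (intro AE_I2) (simp add: abs_mult)
  qed measurable
  have "g R - g 0 = (LBINT z:{0..R}. g' z)"
    using R int_Icc has_field_derivative_at_within[OF g] by (intro set_integral_Icc_of_has_real_derivative[symmetric])
  also have "\<bar>\<dots>\<bar> \<le> (\<integral>z. \<bar>indicator {0..R} z *\<^sub>R g' z\<bar> \<partial>lborel)"
    unfolding set_lebesgue_integral_def by (rule integral_abs_bound)
  also have "\<dots> \<le> (\<integral>z. exp (c * R) * \<bar>g' z * exp (- c * \<bar>z\<bar>)\<bar> \<partial>lborel)"
    using int_Icc int_bound bound unfolding set_integrable_def by (intro integral_mono) auto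
  finally show ?thesis
    by simp
qed

lemma abs_le_of_bounded_derivative:
  fixes g g' :: "real \<Rightarrow> real"
  assumes R: "0 \<le> R" and g: "\<And>x. (g has_real_derivative g' x) (at x)"
    and bound: "\<And>x. 0 \<le> x \<Longrightarrow> x \<le> R \<Longrightarrow> \<bar>g' x\<bar> \<le> B"
  shows "\<bar>g R\<bar> \<le> \<bar>g 0\<bar> + R * B"
proof (cases "R = 0")
  case False
  with R obtain \<xi> where "0 < \<xi>" "\<xi> < R" "g R - g 0 = R * g' \<xi>"
    using MVT2[of 0 R g g'] g by force
  moreover from this have "\<bar>R * g' \<xi>\<bar> \<le> R * B"
    using R bound[of \<xi>] by (simp add: abs_mult mult_left_mono)
  ultimately show ?thesis
    by linarith
qed simp

lemma tendsto_boundary_term_at_top: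
  fixes g g' g'' :: "real \<Rightarrow> real"
  assumes b: "b > 0" and c: "0 \<le> c" "c < 1 / b"
    and g: "\<And>x. (g has_real_derivative g' x) (at x)"
    and g': "\<And>x. (g' has_real_derivative g'' x) (at x)"
    and g'': "integrable lborel (\<lambda>z. g'' z * exp (- c * \<bar>z\<bar>))"
  shows "((\<lambda>R. (g R + b * g' R) * exp (- R / b)) \<longlongrightarrow> 0) at_top"
proof (rule Lim_null_comparison)
  define M where "M = (\<integral>z. \<bar>g'' z * exp (- c * \<bar>z\<bar>)\<bar> \<partial>lborel)"
  define B where "B R = \<bar>g' 0\<bar> + exp (c * R) * M" for R
  have "M \<ge> 0"
    unfolding M_def by simp
  have g'_bound: "\<bar>g' x\<bar> \<le> B R" if "0 \<le> x" "x \<le> R" for x R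
  proof -
    have "\<bar>g' x\<bar> \<le> B x"
      unfolding B_def M_def by (rule abs_le_exp_growth_of_weighted_derivative[OF c(1) g' g'' that(1)])
    also have "\<dots> \<le> B R"
    proof -
      have "c * x \<le> c * R"
        using that c by (intro mult_left_mono) auto
      then show ?thesis
        unfolding B_def using \<open>M \<ge> 0\<close> by (intro add_left_mono mult_right_mono) auto
    qed
    finally show ?thesis .
  qed
  show "\<forall>\<^sub>F R in at_top. norm ((g R + b * g' R) * exp (- R / b))
      \<le> \<bar>g 0\<bar> * exp (- R / b) + \<bar>g' 0\<bar> * ((R + b) * exp (- R / b))
        + M * ((R + b) * exp (- (1 / b - c) * R))"
    using eventually_ge_at_top[of 0]
  proof eventually_elim
    case (elim R)
    have "\<bar>g R\<bar> \<le> \<bar>g 0\<bar> + R * B R"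
      by (rule abs_le_of_bounded_derivative[OF elim g g'_bound])
    moreover have "b * \<bar>g' R\<bar> \<le> b * B R"
      using b g'_bound[OF elim order_refl] by (intro mult_left_mono) auto
    moreover have "\<bar>g R + b * g' R\<bar> \<le> \<bar>g R\<bar> + b * \<bar>g' R\<bar>"
      using b abs_triangle_ineq[of "g R" "b * g' R"] by (simp add: abs_mult)
    ultimately have "\<bar>g R + b * g' R\<bar> * exp (- R / b) \<le> (\<bar>g 0\<bar> + (R + b) * B R) * exp (- R / b)"
      by (intro mult_right_mono) (auto simp: distrib_right)
    also have "\<dots> = \<bar>g 0\<bar> * exp (- R / b) + \<bar>g' 0\<bar> * ((R + b) * exp (- R / b))
        + M * ((R + b) * (exp (c * R) * exp (- R / b)))"
      unfolding B_def by algebra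
    also have "exp (c * R) * exp (- R / b) = exp (- (1 / b - c) * R)"
      unfolding exp_add[symmetric] by (simp add: field_simps)
    finally show ?case
      by (simp add: abs_mult)
  qed
  have "1 / b - c > 0"
    using c by simp
  then have "((\<lambda>R. (R + b) * exp (- (1 / b - c) * R)) \<longlongrightarrow> 0) at_top"
    by real_asymp
  moreover have "((\<lambda>R. exp (- R / b)) \<longlongrightarrow> 0) at_top" "((\<lambda>R. (R + b) * exp (- R / b)) \<longlongrightarrow> 0) at_top"
    using b by real_asymp+
  ultimately show "((\<lambda>R. \<bar>g 0\<bar> * exp (- R / b) + \<bar>g' 0\<bar> * ((R + b) * exp (- R / b))
      + M * ((R + b) * exp (- (1 / b - c) * R))) \<longlongrightarrow> 0) at_top"
    by (auto intro!: tendsto_add_zero tendsto_mult_right_zero)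
qed

lemma laplace_half_line_integral:
  fixes g g' g'' :: "real \<Rightarrow> real"
  assumes b: "b > 0" and c: "0 \<le> c" "c < 1 / b"
    and g: "\<And>x. (g has_real_derivative g' x) (at x)"
    and g': "\<And>x. (g' has_real_derivative g'' x) (at x)"
    and int_g: "integrable lborel (\<lambda>z. g z * exp (- c * \<bar>z\<bar>))"
    and int_g'': "integrable lborel (\<lambda>z. g'' z * exp (- c * \<bar>z\<bar>))"
  shows "set_integrable lborel {0..} (\<lambda>z. (g z - b\<^sup>2 * g'' z) * exp (- z / b))"
    and "(LBINT z:{0..}. (g z - b\<^sup>2 * g'' z) * exp (- z / b)) = b * (g 0 + b * g' 0)"
proof -
  define H where "H z = (g z - b\<^sup>2 * g'' z) * exp (- z / b)" for z
  define P where "P z = - b * ((g z + b * g' z) * exp (- z / b))" for z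
  note [measurable] =
    borel_measurable_has_real_derivative(1)[OF g] borel_measurable_has_real_derivative(2)[OF g']
  have "set_integrable lborel {0..} (\<lambda>z. g z * exp (- z / b) - b\<^sup>2 * (g'' z * exp (- z / b)))"
    using c(2) int_g int_g''
    by (intro set_integral_diff(1) set_integrable_mult_right set_integrable_half_line_of_exp_weight) auto
  then show int_H: "set_integrable lborel {0..} (\<lambda>z. (g z - b\<^sup>2 * g'' z) * exp (- z / b))"
    by (simp add: algebra_simps)
  have P_deriv: "(P has_real_derivative H z) (at z)" for z
  proof -
    have "((\<lambda>z. exp (- z / b)) has_real_derivative exp (- z / b) * (- 1 / b)) (at z)"
      using b by (auto intro!: derivative_eq_intros)
    then have "(P has_real_derivative - b * ((g' z + b * g'' z) * exp (- z / b)
        + exp (- z / b) * (- 1 / b) * (g z + b * g' z))) (at z)"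
      unfolding P_def by (intro DERIV_cmult DERIV_mult DERIV_add g g')
    moreover have "- b * ((g' z + b * g'' z) * exp (- z / b) + exp (- z / b) * (- 1 / b) * (g z + b * g' z))
        = H z"
      unfolding H_def using b by (simp add: field_simps power2_eq_square)
    ultimately show ?thesis
      by simp
  qed
  have "((\<lambda>R. LBINT z:{0..R}. H z) \<longlongrightarrow> (LBINT z:{0..}. H z)) at_top"
    using int_H unfolding H_def by (intro tendsto_set_lebesgue_integral_at_top) auto
  moreover have "((\<lambda>R. LBINT z:{0..R}. H z) \<longlongrightarrow> 0 - P 0) at_top"
  proof (rule Lim_transform_eventually)
    have "((\<lambda>R. (g R + b * g' R) * exp (- R / b)) \<longlongrightarrow> 0) at_top"
      by (rule tendsto_boundary_term_at_top[OF b c g g' int_g''])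
    then show "((\<lambda>R. P R - P 0) \<longlongrightarrow> 0 - P 0) at_top"
      unfolding P_def by (intro tendsto_diff tendsto_mult_right_zero) auto
    have FTC: "P R - P 0 = (LBINT z:{0..R}. H z)" if "0 \<le> R" for R
      using that int_H has_field_derivative_at_within[OF P_deriv] unfolding H_def
      by (intro set_integral_Icc_of_has_real_derivative[symmetric] set_integrable_subset[OF int_H]) auto
    show "\<forall>\<^sub>F R in at_top. P R - P 0 = (LBINT z:{0..R}. H z)"
      using eventually_ge_at_top[of 0] by (rule eventually_mono) (rule FTC)
  qed
  ultimately have "(LBINT z:{0..}. H z) = 0 - P 0"
    by (rule tendsto_unique[rotated]) simp
  then show "(LBINT z:{0..}. (g z - b\<^sup>2 * g'' z) * exp (- z / b)) = b * (g 0 + b * g' 0)"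
    by (simp add: H_def P_def)
qed

lemma laplace_measure_integral_split:
  fixes g :: "real \<Rightarrow> real"
  assumes b: "b > 0" and [measurable]: "g \<in> borel_measurable borel"
    and pos: "set_integrable lborel {0..} (\<lambda>z. g z * exp (- z / b))"
    and neg: "set_integrable lborel {0..} (\<lambda>z. g (- z) * exp (- z / b))"
  shows "integrable (laplace_measure b) g"
    and "(\<integral>z. g z \<partial>laplace_measure b)
           = ((LBINT z:{0..}. g z * exp (- z / b)) + (LBINT z:{0..}. g (- z) * exp (- z / b))) / (2 * b)"
proof -
  define p where "p z = indicator {0..} z * (g z * exp (- z / b))" for z
  \<comment> \<open>open at 0, so that p z and n (- z) never overlap\<close>
  define n where "n z = indicator {0<..} z * (g (- z) * exp (- z / b))" for z
  have int_p: "integrable lborel p"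
    using pos unfolding set_integrable_def p_def by simp
  have int_n: "integrable lborel n"
    using set_integrable_subset[OF neg, of "{0<..}"] unfolding set_integrable_def n_def
    by (simp add: subset_eq)
  have "AE z in lborel. z \<noteq> 0"
    by (rule AE_lborel_singleton)
  then have "integral\<^sup>L lborel n = (LBINT z:{0..}. g (- z) * exp (- z / b))"
    unfolding set_lebesgue_integral_def n_def
    by (intro integral_cong_AE) (auto elim!: eventually_mono simp: indicator_def)
  moreover have "integral\<^sup>L lborel (\<lambda>z. n (- z)) = integral\<^sup>L lborel n"
    using lborel_integral_real_affine[of "-1" n 0] by simp
  moreover have "integrable lborel (\<lambda>z. n (- z))"
    using lborel_integrable_real_affine[OF int_n, of "-1" 0] by simp
  moreover have density_eq: "laplace_density b z *\<^sub>R g z = (p z + n (- z)) / (2 * b)" for z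
    using b by (cases "0 \<le> z") (simp_all add: laplace_density_def p_def n_def indicator_def)
  ultimately have "integrable lborel (\<lambda>z. laplace_density b z *\<^sub>R g z)"
    and "(\<integral>z. laplace_density b z *\<^sub>R g z \<partial>lborel)
           = (integral\<^sup>L lborel p + (LBINT z:{0..}. g (- z) * exp (- z / b))) / (2 * b)"
    using int_p by (simp_all add: density_eq)
  moreover have "integral\<^sup>L lborel p = (LBINT z:{0..}. g z * exp (- z / b))"
    unfolding set_lebesgue_integral_def p_def by simp
  moreover have "laplace_density b \<in> borel_measurable borel" "\<And>z. 0 \<le> laplace_density b z"
    using b unfolding laplace_density_def by auto
  ultimately show "integrable (laplace_measure b) g"
    and "(\<integral>z. g z \<partial>laplace_measure b)
           = ((LBINT z:{0..}. g z * exp (- z / b)) + (LBINT z:{0..}. g (- z) * exp (- z / b))) / (2 * b)"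
    unfolding laplace_measure_def by (simp_all add: integrable_density integral_density)
qed

lemma laplace_half_line_integral_affine:
  fixes F F' F'' :: "real \<Rightarrow> real"
  assumes b: "b > 0" and s: "\<bar>s\<bar> = 1"
    and F: "\<And>x. (F has_real_derivative F' x) (at x)"
    and F': "\<And>x. (F' has_real_derivative F'' x) (at x)"
    and temp_F: "tempered_distribution F" and temp_F'': "tempered_distribution F''"
  shows "set_integrable lborel {0..} (\<lambda>z. (F (q + s * z) - b\<^sup>2 * F'' (q + s * z)) * exp (- z / b))"
    and "(LBINT z:{0..}. (F (q + s * z) - b\<^sup>2 * F'' (q + s * z)) * exp (- z / b))
           = b * (F q + b * s * F' q)"
proof -
  define c where "c = 1 / (2 * b)"
  have c: "0 < c" "c < 1 / b"
    using b by (simp_all add: c_def divide_strict_left_mono)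
  note meas_F = borel_measurable_has_real_derivative(1)[OF F]
  note meas_F'' = borel_measurable_has_real_derivative(2)[OF F']
  have affine: "((\<lambda>z. q + s * z) has_real_derivative s) (at z)" for z
    by (auto intro!: derivative_eq_intros)
  have g: "((\<lambda>z. F (q + s * z)) has_real_derivative F' (q + s * z) * s) (at z)" for z
    by (rule DERIV_chain2[OF F affine])
  have g': "((\<lambda>z. F' (q + s * z) * s) has_real_derivative F'' (q + s * z)) (at z)" for z
  proof -
    have "((\<lambda>z. F' (q + s * z) * s) has_real_derivative F'' (q + s * z) * s * s) (at z)"
      by (intro DERIV_cmult_right DERIV_chain2[OF F' affine])
    moreover have "s * s = 1"
      using abs_mult_self_eq[of s] s by simp
    ultimately show ?thesis
      by (simp only: mult.assoc mult_1_right)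
  qed
  have int_F: "integrable lborel (\<lambda>z. F (q + s * z) * exp (- c * \<bar>z\<bar>))"
    by (intro integrable_affine_exp_weight_of_div_cosh[OF c(1) s meas_F]
        tempered_distribution_integrable_div_cosh[OF temp_F meas_F c(1)])
  have int_F'': "integrable lborel (\<lambda>z. F'' (q + s * z) * exp (- c * \<bar>z\<bar>))"
    by (intro integrable_affine_exp_weight_of_div_cosh[OF c(1) s meas_F'']
        tempered_distribution_integrable_div_cosh[OF temp_F'' meas_F'' c(1)])
  note half_line = laplace_half_line_integral[OF b less_imp_le[OF c(1)] c(2) g g' int_F int_F'']
  show "set_integrable lborel {0..} (\<lambda>z. (F (q + s * z) - b\<^sup>2 * F'' (q + s * z)) * exp (- z / b))"
    and "(LBINT z:{0..}. (F (q + s * z) - b\<^sup>2 * F'' (q + s * z)) * exp (- z / b))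
           = b * (F q + b * s * F' q)"
    using half_line by (simp_all add: ac_simps)
qed

theorem mainTheorem4:
  fixes b L :: real and f h :: "real \<Rightarrow> real"
  defines "ft \<equiv> (\<lambda>x. if x \<ge> L then f x else h x)"
  assumes "b > 0"
    and "\<forall>x. ft differentiable (at x)"
    and "\<forall>x. deriv ft differentiable (at x)"
    and "tempered_distribution ft"
    and "tempered_distribution (deriv (deriv ft))"
    and "q \<ge> L"
  shows "integrable (laplace_measure b) (\<lambda>z. ft (q + z) - b\<^sup>2 * deriv (deriv ft) (q + z))
     \<and> (\<integral>z. ft (q + z) - b\<^sup>2 * deriv (deriv ft) (q + z) \<partial>laplace_measure b) = f q"
proof -
  have ft: "(ft has_real_derivative deriv ft x) (at x)"
    and ft': "(deriv ft has_real_derivative deriv (deriv ft) x) (at x)" for x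
    using assms(3,4) by (simp_all add: DERIV_deriv_iff_real_differentiable)
  define g where "g z = ft (q + z) - b\<^sup>2 * deriv (deriv ft) (q + z)" for z
  note half_line = laplace_half_line_integral_affine[OF assms(2) _ ft ft' assms(5,6), of _ q]
  have pos: "set_integrable lborel {0..} (\<lambda>z. g z * exp (- z / b))"
    and int_pos: "(LBINT z:{0..}. g z * exp (- z / b)) = b * (ft q + b * deriv ft q)"
    using half_line[of 1] by (simp_all add: g_def)
  have neg: "set_integrable lborel {0..} (\<lambda>z. g (- z) * exp (- z / b))"
    and int_neg: "(LBINT z:{0..}. g (- z) * exp (- z / b)) = b * (ft q - b * deriv ft q)"
    using half_line[of "-1"] by (simp_all add: g_def)
  note [measurable] =
    borel_measurable_has_real_derivative(1)[OF ft] borel_measurable_has_real_derivative(2)[OF ft']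
  have "g \<in> borel_measurable borel"
    unfolding g_def by measurable
  note split = laplace_measure_integral_split[OF assms(2) this pos neg]
  have "(\<integral>z. g z \<partial>laplace_measure b) = ft q"
    using assms(2) unfolding split(2) int_pos int_neg by (simp add: field_simps)
  also have "ft q = f q"
    using assms(7) by (simp add: ft_def)
  finally show ?thesis
    using split(1) by (simp add: g_def)
qed

end
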